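(* Let $G=([k],E)$ be a graph and let $(P_1,\dots,P_k)$ be a $k$-tuple of finite sets in $\mathbb{R}^d$ that is compatible with $G$ and has profile $\boldsymbol\lambda$. If some vertex $i\in[k]$ has degree in $G$ strictly larger than $d-\lambda_i$, then there is no $k$-tuple $(p_1,\dots,p_k)$ with $p_j\in P_j$ for all $j$ whose points are pairwise at distance $1$; that is, $\psi_{k,d}(P_1,\dots,P_k)=0$.
   Context: A sphere of dimension $\ell$ in $\mathbb{R}^d$ ($0\le\ell\le d-1$) is the set of points of an $(\ell+1)$-dimensional affine subspace at a fixed positive distance from a fixed point of that subspace. For finite sets $P_1,\dots,P_k\subset\mathbb{R}^d$, the profile of $(P_1,\dots,P_k)$ is $\boldsymbol\lambda=(\lambda_1,\dots,\lambda_k)$, where $\lambda_i=0$ if $|P_i|\le 3$, and otherwise $\lambda_i$ is the smallest $\ell$ such that some sphere of dimension $\ell$ contains $P_i$, with $\lambda_i=d$ if no sphere contains $P_i$. A graph $G=([k],E)$ is compatible with $(P_1,\dots,P_k)$ if $\|p-p'\|=1$ for every edge $\{i,j\}\in E$ and all $p\in P_i$, $p'\in P_j$. $\psi_{k,d}(P_1,\dots,P_k)$ is the number of $k$-tuples $(p_1,\dots,p_k)$ with $p_i\in P_i$ whose points are pairwise at distance $1$. *)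

theory Defs
  imports "HOL-Analysis.Analysis"
begin

text \<open>Ambient space: R^d is modelled as real^'n with d = CARD('n).\<close>

definition is_sphere :: "nat \<Rightarrow> ('a::euclidean_space) set \<Rightarrow> bool" where
  "is_sphere l S \<longleftrightarrow> (\<exists>A c r. affine A \<and> aff_dim A = int l + 1 \<and> c \<in> A \<and> r > 0 \<and>
       S = {x \<in> A. dist x c = r})"

definition profile_entry :: "('a::euclidean_space) set \<Rightarrow> nat" where
  "profile_entry P =
     (if card P \<le> 3 then 0
      else if \<exists>l S. is_sphere l S \<and> P \<subseteq> S
           then (LEAST l. \<exists>S. is_sphere l S \<and> P \<subseteq> S)
           else DIM('a))"

definition is_graph_on :: "nat \<Rightarrow> nat set set \<Rightarrow> bool" where
  "is_graph_on k E \<longleftrightarrow> (\<forall>e\<in>E. e \<subseteq> {1..k} \<and> card e = 2)"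

definition degree :: "nat set set \<Rightarrow> nat \<Rightarrow> nat" where
  "degree E i = card {j. {i, j} \<in> E \<and> j \<noteq> i}"

definition compatible :: "nat set set \<Rightarrow> (nat \<Rightarrow> ('a::euclidean_space) set) \<Rightarrow> bool" where
  "compatible E P \<longleftrightarrow> (\<forall>i j. {i, j} \<in> E \<longrightarrow> (\<forall>p\<in>P i. \<forall>p'\<in>P j. dist p p' = 1))"

definition psi :: "nat \<Rightarrow> (nat \<Rightarrow> ('a::euclidean_space) set) \<Rightarrow> nat" where
  "psi k P = card {p \<in> PiE {1..k} P. \<forall>i\<in>{1..k}. \<forall>j\<in>{1..k}. i \<noteq> j \<longrightarrow> dist (p i) (p j) = 1}"

end

theory Submission
  imports Defs
begin

text \<open>Suppose p_1, ..., p_k are pairwise at distance 1 and let Q be the set of points p_j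
  with j adjacent to i. Then Q together with p_i is a regular unit simplex, so |Q| <= d. Every
  point of P_i is at distance 1 from all of Q, hence lies on the perpendicular bisectors of the
  |Q| - 1 independent edges q - b (q in Q) at a fixed b in Q: the affine hull of P_i has
  dimension at most d - |Q| + 1. Being equidistant from b, P_i also lies on a sphere centred
  at the foot of b in that affine hull, so lambda_i <= dim aff P_i - 1 <= d - deg i.\<close>

lemma independent_if_unit_inner_half:
  fixes V :: "'a::euclidean_space set"
  assumes fin: "finite V" and unit: "\<And>v. v \<in> V \<Longrightarrow> v \<bullet> v = 1"
    and half: "\<And>v w. v \<in> V \<Longrightarrow> w \<in> V \<Longrightarrow> v \<noteq> w \<Longrightarrow> v \<bullet> w = 1/2"
  shows "independent V"
proof
  assume "dependent V"
  then obtain u where nz: "\<exists>v\<in>V. u v \<noteq> 0" and comb: "(\<Sum>v\<in>V. u v *\<^sub>R v) = 0"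
    using dependent_finite[OF fin] by auto
  define s where "s = (\<Sum>v\<in>V. u v)"
  have coeff: "u w = - s" if "w \<in> V" for w
  proof -
    have "0 = w \<bullet> (\<Sum>v\<in>V. u v *\<^sub>R v)" using comb by simp
    also have "\<dots> = (\<Sum>v\<in>V. u v * (w \<bullet> v))" by (simp add: inner_sum_right)
    also have "\<dots> = (\<Sum>v\<in>V. u v / 2 + (if v = w then u v / 2 else 0))"
      using unit half that by (intro sum.cong) (auto simp: inner_commute)
    also have "\<dots> = s / 2 + u w / 2"
      using that fin by (simp add: sum.distrib s_def sum_divide_distrib)
    finally show ?thesis by simp
  qed
  then have "s = (\<Sum>v\<in>V. - s)"
    unfolding s_def by (rule sum.cong[OF refl])
  then have "(1 + real (card V)) * s = 0"
    by (simp add: algebra_simps)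
  then have "s = 0"
    by (metis add_nonneg_eq_0_iff mult_eq_0_iff of_nat_0_le_iff zero_le_one one_neq_zero)
  then show False using nz coeff by auto
qed

lemma unit_simplex_edges_independent:
  fixes Q :: "'a::euclidean_space set"
  assumes fin: "finite Q" and b: "b \<in> Q" and unit: "pairwise (\<lambda>q q'. dist q q' = 1) Q"
  shows "independent ((\<lambda>q. q - b) ` (Q - {b}))"
    and "card ((\<lambda>q. q - b) ` (Q - {b})) = card Q - 1"
proof -
  have dist1: "dist q q' = 1" if "q \<in> Q" "q' \<in> Q" "q \<noteq> q'" for q q'
    using unit that by (auto simp: pairwise_def)
  show "independent ((\<lambda>q. q - b) ` (Q - {b}))"
  proof (rule independent_if_unit_inner_half)
    show "finite ((\<lambda>q. q - b) ` (Q - {b}))" using fin by simp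
    show "v \<bullet> v = 1" if "v \<in> (\<lambda>q. q - b) ` (Q - {b})" for v
      using that dist1 b by (force simp: dist_norm simp flip: power2_norm_eq_inner)
    show "v \<bullet> w = 1/2" if vw: "v \<in> (\<lambda>q. q - b) ` (Q - {b})" "w \<in> (\<lambda>q. q - b) ` (Q - {b})" "v \<noteq> w"
      for v w
    proof -
      obtain q q' where "q \<in> Q - {b}" "q' \<in> Q - {b}" "q \<noteq> q'" "v = q - b" "w = q' - b"
        using vw by blast
      then show ?thesis
        using dist1 b dot_norm_neg[of "q - b" "q' - b"] by (simp add: dist_norm)
    qed
  qed
  have "inj_on (\<lambda>q. q - b) (Q - {b})" by (auto simp: inj_on_def)
  then show "card ((\<lambda>q. q - b) ` (Q - {b})) = card Q - 1"
    using fin b by (simp add: card_image)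
qed

lemma card_le_DIM_if_pairwise_unit_dist:
  fixes Q :: "'a::euclidean_space set"
  assumes "finite Q" and "pairwise (\<lambda>q q'. dist q q' = 1) Q"
  shows "card Q \<le> DIM('a) + 1"
proof (cases "Q = {}")
  case False
  then obtain b where "b \<in> Q" by blast
  then show ?thesis
    using unit_simplex_edges_independent[OF assms(1) _ assms(2)] independent_bound by fastforce
qed simp

lemma perpendicular_bisector_orthogonal:
  fixes x y q b :: "'a::real_inner"
  assumes "dist x q = dist x b" and "dist y q = dist y b"
  shows "(q - b) \<bullet> (x - y) = 0"
proof -
  have "(dist x q)\<^sup>2 = (dist x b)\<^sup>2" "(dist y q)\<^sup>2 = (dist y b)\<^sup>2"
    using assms by simp_all
  then show ?thesis
    by (simp add: dist_norm power2_norm_eq_inner inner_diff inner_commute algebra_simps)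
qed

lemma dim_add_dim_le_if_orthogonal:
  fixes U V :: "'a::euclidean_space set"
  assumes "\<And>u v. u \<in> U \<Longrightarrow> v \<in> V \<Longrightarrow> orthogonal u v"
  shows "dim U + dim V \<le> DIM('a)"
proof -
  let ?W = "{y \<in> UNIV. \<forall>x \<in> span V. orthogonal x y}"
  have "U \<subseteq> ?W"
    using assms by (auto intro: orthogonal_to_span simp: orthogonal_commute)
  then have "dim U \<le> dim ?W" by (rule dim_subset)
  moreover have "dim ?W + dim (span V) = dim (UNIV :: 'a set)"
    by (rule dim_subspace_orthogonal_to_vectors) auto
  ultimately show ?thesis by (simp add: dim_span)
qed

lemma affine_closest_point_Pythagorean:
  fixes A :: "'a::euclidean_space set" and b :: 'a
  assumes "affine A" "closed A" "x \<in> A"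
  defines "c \<equiv> closest_point A b"
  shows "(dist x b)\<^sup>2 = (dist x c)\<^sup>2 + (dist c b)\<^sup>2"
proof -
  have "c \<in> A"
    unfolding c_def using assms by (auto intro: closest_point_in_set)
  have "2 *\<^sub>R c - x \<in> A"
    using mem_affine[OF \<open>affine A\<close> \<open>c \<in> A\<close> \<open>x \<in> A\<close>, of 2 "-1"] by (simp add: scaleR_2)
  have convex: "convex A" using \<open>affine A\<close> by (rule affine_imp_convex)
  have "(b - c) \<bullet> (x - c) \<le> 0" "(b - c) \<bullet> ((2 *\<^sub>R c - x) - c) \<le> 0"
    unfolding c_def using closest_point_dot[OF convex \<open>closed A\<close>] assms \<open>2 *\<^sub>R c - x \<in> A\<close>
    by blast+
  \<comment> \<open>Reflecting x through c stays in the affine set, so the obtuse-angle criterion becomes an equality.\<close>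
  then have "(b - c) \<bullet> (x - c) = 0"
    by (simp add: scaleR_2 inner_diff_right inner_add_right)
  then show ?thesis
    using dot_norm_neg[of "x - c" "b - c"]
    by (simp add: dist_norm norm_minus_commute inner_commute)
qed

lemma is_sphere_imp_less_DIM:
  assumes "is_sphere l (S :: 'a::euclidean_space set)"
  shows "l < DIM('a)"
proof -
  obtain A :: "'a set" where "aff_dim A = int l + 1"
    using assms unfolding is_sphere_def by auto
  then show ?thesis using aff_dim_le_DIM[of A] by linarith
qed

lemma profile_entry_le_DIM: "profile_entry (P :: 'a::euclidean_space set) \<le> DIM('a)"
proof -
  have "(LEAST l. \<exists>S. is_sphere l S \<and> P \<subseteq> S) \<le> DIM('a)"
    if "is_sphere l S" "P \<subseteq> S" for l S
    using Least_le[of "\<lambda>l. \<exists>S. is_sphere l S \<and> P \<subseteq> S" l] that is_sphere_imp_less_DIM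
    by fastforce
  then show ?thesis
    unfolding profile_entry_def by auto
qed

lemma profile_entry_le_aff_dim_if_equidistant:
  fixes P :: "'a::euclidean_space set"
  assumes equidistant: "\<And>x. x \<in> P \<Longrightarrow> dist x b = \<rho>"
  shows "profile_entry P \<le> nat (aff_dim P - 1)"
proof (cases "card P \<le> 3")
  case False
  then have "finite P" "card P \<ge> 2" using card.infinite by fastforce+
  then obtain p p' where pP: "p \<in> P" "p' \<in> P" "p \<noteq> p'"
    by (metis One_nat_def card_le_Suc0_iff_eq not_less_eq_eq numeral_2_eq_2)
  define A where "A = affine hull P"
  define c where "c = closest_point A b"
  define r where "r = dist p c"
  have affA: "affine A" and closedA: "closed A" and PA: "P \<subseteq> A"
    by (simp_all add: A_def hull_subset)
  have cA: "c \<in> A"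
    unfolding c_def using closest_point_in_set[OF closedA] PA pP by blast
  have dist_c: "dist x c = r" if "x \<in> P" for x
  proof -
    have "(dist x c)\<^sup>2 = (dist p c)\<^sup>2"
      using affine_closest_point_Pythagorean[OF affA closedA, of _ b] PA that pP equidistant
      unfolding c_def by (metis add_right_cancel subsetD)
    then show ?thesis unfolding r_def by (simp add: power2_eq_iff_nonneg)
  qed
  have "r > 0"
    using dist_c pP by (metis dist_eq_0_iff dist_commute zero_less_dist_iff)
  have "aff_dim P \<ge> 1"
    using pP aff_dim_eq_0[of P] aff_dim_geq[of P] aff_dim_empty[of P] by fastforce
  then have "aff_dim A = int (nat (aff_dim P - 1)) + 1"
    by (simp add: A_def)
  then have sphere: "is_sphere (nat (aff_dim P - 1)) {x \<in> A. dist x c = r}"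
    unfolding is_sphere_def using affA cA \<open>r > 0\<close> by blast
  moreover have on_sphere: "P \<subseteq> {x \<in> A. dist x c = r}"
    using PA dist_c by auto
  ultimately have "profile_entry P = (LEAST l. \<exists>S. is_sphere l S \<and> P \<subseteq> S)"
    unfolding profile_entry_def using False by auto
  also have "\<dots> \<le> nat (aff_dim P - 1)"
    using sphere on_sphere by (blast intro: Least_le)
  finally show ?thesis .
qed (simp add: profile_entry_def)

lemma aff_dim_add_card_le_if_unit_dist:
  fixes P Q :: "'a::euclidean_space set"
  assumes "finite Q" "pairwise (\<lambda>q q'. dist q q' = 1) Q" "b \<in> Q" "p \<in> P"
    and unit: "\<And>x q. x \<in> P \<Longrightarrow> q \<in> Q \<Longrightarrow> dist x q = 1"
  shows "aff_dim P + card Q \<le> DIM('a) + 1"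
proof -
  define V where "V = (\<lambda>q. q - b) ` (Q - {b})"
  define U where "U = (+) (- p) ` P"
  have "aff_dim P = dim U"
    unfolding U_def using \<open>p \<in> P\<close> by (intro aff_dim_eq_dim hull_inc)
  moreover have "dim V = card Q - 1"
  proof -
    have "independent V" "card V = card Q - 1"
      unfolding V_def using unit_simplex_edges_independent[OF assms(1,3,2)] by blast+
    then show ?thesis by (simp add: dim_eq_card_independent)
  qed
  moreover have "dim U + dim V \<le> DIM('a)"
  proof (rule dim_add_dim_le_if_orthogonal)
    fix u v assume "u \<in> U" "v \<in> V"
    then obtain x q where "x \<in> P" "q \<in> Q" "u = x - p" "v = q - b"
      unfolding U_def V_def by auto
    moreover have "dist x q = dist x b" "dist p q = dist p b"
      using unit \<open>x \<in> P\<close> \<open>p \<in> P\<close> \<open>q \<in> Q\<close> \<open>b \<in> Q\<close> by simp_all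
    then have "(q - b) \<bullet> (x - p) = 0"
      by (rule perpendicular_bisector_orthogonal)
    ultimately show "orthogonal u v"
      by (simp add: orthogonal_def inner_commute)
  qed
  moreover have "card Q \<ge> 1"
    using assms(1,3) by (auto simp: Suc_le_eq card_gt_0_iff)
  ultimately show ?thesis by linarith
qed

lemma profile_entry_add_card_le:
  fixes P Q :: "'a::euclidean_space set"
  assumes "finite Q" "pairwise (\<lambda>q q'. dist q q' = 1) Q" "p \<in> P"
    and unit: "\<And>x q. x \<in> P \<Longrightarrow> q \<in> Q \<Longrightarrow> dist x q = 1"
  shows "profile_entry P + card Q \<le> DIM('a)"
proof (cases "Q = {}")
  case True
  then show ?thesis using profile_entry_le_DIM[of P] by simp
next
  case False
  then obtain b where "b \<in> Q" by blast
  have "p \<notin> Q" using unit[OF \<open>p \<in> P\<close>, of p] by auto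
  have "pairwise (\<lambda>q q'. dist q q' = 1) (insert p Q)"
    using assms(2) unit[OF \<open>p \<in> P\<close>] unfolding pairwise_insert by (metis dist_commute)
  then have "card Q \<le> DIM('a)"
    using card_le_DIM_if_pairwise_unit_dist[of "insert p Q"] assms(1) \<open>p \<notin> Q\<close> by simp
  moreover have "profile_entry P \<le> nat (aff_dim P - 1)"
    by (rule profile_entry_le_aff_dim_if_equidistant[where b = b and \<rho> = 1]) (simp add: unit \<open>b \<in> Q\<close>)
  moreover have "aff_dim P + card Q \<le> DIM('a) + 1"
    using aff_dim_add_card_le_if_unit_dist[OF assms(1,2) \<open>b \<in> Q\<close> assms(3)] unit by blast
  ultimately show ?thesis by linarith
qed

lemma unit_dist_tuple_image:
  assumes unit: "\<forall>a\<in>I. \<forall>b\<in>I. a \<noteq> b \<longrightarrow> dist (p a) (p b) = 1" and "J \<subseteq> I"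
  shows "inj_on p J" and "pairwise (\<lambda>q q'. dist q q' = 1) (p ` J)"
proof -
  have dist1: "dist (p a) (p b) = 1" if "a \<in> J" "b \<in> J" "a \<noteq> b" for a b
    using unit that \<open>J \<subseteq> I\<close> by blast
  then show "inj_on p J"
    unfolding inj_on_def by fastforce
  show "pairwise (\<lambda>q q'. dist q q' = 1) (p ` J)"
    unfolding pairwise_image by (auto simp: pairwise_def dist1)
qed

lemma unit_dist_tuple_profile_entry_add_degree_le:
  fixes P :: "nat \<Rightarrow> 'a::euclidean_space set"
  assumes "is_graph_on k E" "compatible E P" "i \<in> {1..k}" "p \<in> PiE {1..k} P"
    and unit: "\<forall>a\<in>{1..k}. \<forall>b\<in>{1..k}. a \<noteq> b \<longrightarrow> dist (p a) (p b) = 1"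
  shows "profile_entry (P i) + degree E i \<le> DIM('a)"
proof -
  define N where "N = {j. {i, j} \<in> E \<and> j \<noteq> i}"
  have "N \<subseteq> {1..k}"
  proof
    fix j assume "j \<in> N"
    then have "{i, j} \<in> E" by (simp add: N_def)
    then have "{i, j} \<subseteq> {1..k}"
      using assms(1) unfolding is_graph_on_def by blast
    then show "j \<in> {1..k}" by simp
  qed
  have "card (p ` N) = degree E i"
    using card_image[OF unit_dist_tuple_image(1)[OF unit \<open>N \<subseteq> {1..k}\<close>]]
    by (simp add: degree_def N_def)
  moreover have "profile_entry (P i) + card (p ` N) \<le> DIM('a)"
  proof (rule profile_entry_add_card_le)
    show "finite (p ` N)"
      using \<open>N \<subseteq> {1..k}\<close> finite_subset by blast
    show "pairwise (\<lambda>q q'. dist q q' = 1) (p ` N)"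
      using unit_dist_tuple_image(2)[OF unit \<open>N \<subseteq> {1..k}\<close>] .
    show "p i \<in> P i" using assms(3,4) by auto
    show "dist x q = 1" if "x \<in> P i" "q \<in> p ` N" for x q
    proof -
      obtain j where "j \<in> N" "q = p j" using \<open>q \<in> p ` N\<close> by blast
      moreover have "p j \<in> P j" using assms(4) \<open>j \<in> N\<close> \<open>N \<subseteq> {1..k}\<close> by auto
      ultimately show ?thesis
        using assms(2) \<open>x \<in> P i\<close> unfolding compatible_def N_def by blast
    qed
  qed
  ultimately show ?thesis by simp
qed

theorem lemma11p5:
  fixes k :: nat and E :: "nat set set" and P :: "nat \<Rightarrow> (real^'n) set" and i :: nat
  assumes "is_graph_on k E"
    and "\<forall>j\<in>{1..k}. finite (P j)"
    and "compatible E P"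
    and "i \<in> {1..k}"
    and "int (degree E i) > int CARD('n) - int (profile_entry (P i))"
  shows "psi k P = 0"
proof -
  have "{p \<in> PiE {1..k} P. \<forall>a\<in>{1..k}. \<forall>b\<in>{1..k}. a \<noteq> b \<longrightarrow> dist (p a) (p b) = 1} = {}"
    (is "?unit_dist_tuples = {}")
  proof (rule equals0I)
    fix p assume "p \<in> ?unit_dist_tuples"
    then have "profile_entry (P i) + degree E i \<le> DIM(real^'n)"
      using unit_dist_tuple_profile_entry_add_degree_le[OF assms(1,3,4)] by blast
    then show False using assms(5) by simp
  qed
  then show ?thesis
    unfolding psi_def by (simp only: card.empty)
qed

end
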